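(* Let $\mathcal O$ be a phylogenetic quiver and let $A$ be a regular vertex of $\mathcal O$. Then the clade $\mathcal O_A$ is a phylogenetic quiver.
   Context: A quiver consists of a class of vertices and, for each ordered pair of vertices $(A,B)$, a set of edges $A\to B$ (loops and multiple edges allowed). An evolution of length $m\ge 0$ is a sequence $A_0\leftarrow A_1\leftarrow\cdots\leftarrow A_m$ of vertices together with edges $A_k\to A_{k-1}$ ($1\le k\le m$); $A_0$ is its initial and $A_m$ its terminal vertex. Write $A\le B$ ($A$ is an ancestor of $B$, $B$ a descendant of $A$) if there is an evolution with initial vertex $A$ and terminal vertex $B$; $A,B$ are isotypic ($A\sim B$) if $A\le B$ and $B\le A$. A vertex $A$ is primitive if every ancestor of $A$ is isotypic to $A$. A full evolution for $X$ is an evolution with primitive initial vertex and terminal vertex $X$. The height $h(X)$ is the smallest length of a full evolution for $X$ ($h(X)=\infty$ if none exists). An evolution $\alpha=(A_0\leftarrow\cdots\leftarrow A_m)$ embeds in $\beta=(B_0\leftarrow\cdots\leftarrow B_n)$ if $m\le n$ and there are integers $0\le r_0<r_1<\cdots<r_m\le n$ with $A_k\sim B_{r_k}$ for all $k$. A universal evolution for $X$ is a full evolution for $X$ that embeds in every full evolution for $X$; $X$ is phylogenetic if it has a universal evolution. A quiver is monotonous if $h(A)\ge h(B)$ for every edge $A\to B$; it is small if the isotypy classes of its vertices form a set; it is phylogenetic if it is small, monotonous, and all its vertices are phylogenetic. The clade $\mathcal O_A$ of a vertex $A$ is the quiver formed by all descendants of $A$ in $\mathcal O$ and all edges of $\mathcal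 O$ between them; heights, primitivity etc. in $\mathcal O_A$ are computed within $\mathcal O_A$. A vertex $A$ is regular if for every $B$ in $\mathcal O_A$ with $h(B)=h(A)$ there is an edge $B\to A$ in $\mathcal O$. *)

theory Defs
  imports "HOL-Library.Extended_Nat"
begin

text \<open>A quiver is given by a vertex set V and, for each ordered pair (a,b),
  the set of edges a \<rightarrow> b, namely Ed a b.
  An evolution A_0 \<leftarrow> A_1 \<leftarrow> ... \<leftarrow> A_m is a nonempty list of vertices xs
  (xs!k = A_k, length m = length xs - 1) together with a list es of edges,
  es!k being an edge A_(k+1) \<rightarrow> A_k.\<close>

definition evol :: "'v set \<Rightarrow> ('v \<Rightarrow> 'v \<Rightarrow> 'e set) \<Rightarrow> 'v list \<Rightarrow> 'e list \<Rightarrow> bool" where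
  "evol V Ed xs es \<longleftrightarrow> xs \<noteq> [] \<and> set xs \<subseteq> V \<and> length es = length xs - 1 \<and>
     (\<forall>k < length es. es ! k \<in> Ed (xs ! (k+1)) (xs ! k))"

definition anc :: "'v set \<Rightarrow> ('v \<Rightarrow> 'v \<Rightarrow> 'e set) \<Rightarrow> 'v \<Rightarrow> 'v \<Rightarrow> bool" where
  "anc V Ed a b \<longleftrightarrow> (\<exists>xs es. evol V Ed xs es \<and> hd xs = a \<and> last xs = b)"

definition isotypic :: "'v set \<Rightarrow> ('v \<Rightarrow> 'v \<Rightarrow> 'e set) \<Rightarrow> 'v \<Rightarrow> 'v \<Rightarrow> bool" where
  "isotypic V Ed a b \<longleftrightarrow> anc V Ed a b \<and> anc V Ed b a"

definition primitive :: "'v set \<Rightarrow> ('v \<Rightarrow> 'v \<Rightarrow> 'e set) \<Rightarrow> 'v \<Rightarrow> bool" where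
  "primitive V Ed a \<longleftrightarrow> a \<in> V \<and> (\<forall>b. anc V Ed b a \<longrightarrow> isotypic V Ed b a)"

definition full_evol :: "'v set \<Rightarrow> ('v \<Rightarrow> 'v \<Rightarrow> 'e set) \<Rightarrow> 'v \<Rightarrow> 'v list \<Rightarrow> 'e list \<Rightarrow> bool" where
  "full_evol V Ed x xs es \<longleftrightarrow> evol V Ed xs es \<and> primitive V Ed (hd xs) \<and> last xs = x"

definition height :: "'v set \<Rightarrow> ('v \<Rightarrow> 'v \<Rightarrow> 'e set) \<Rightarrow> 'v \<Rightarrow> enat" where
  "height V Ed x =
     (if \<exists>xs es. full_evol V Ed x xs es
      then enat (LEAST m. \<exists>xs es. full_evol V Ed x xs es \<and> length xs - 1 = m)
      else \<infinity>)"

definition embeds :: "'v set \<Rightarrow> ('v \<Rightarrow> 'v \<Rightarrow> 'e set) \<Rightarrow> 'v list \<Rightarrow> 'v list \<Rightarrow> bool" where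
  "embeds V Ed xs ys \<longleftrightarrow> length xs \<le> length ys \<and>
     (\<exists>r. strict_mono_on {..<length xs} r \<and>
          (\<forall>k < length xs. r k < length ys \<and> isotypic V Ed (xs ! k) (ys ! (r k))))"

definition universal_evol :: "'v set \<Rightarrow> ('v \<Rightarrow> 'v \<Rightarrow> 'e set) \<Rightarrow> 'v \<Rightarrow> 'v list \<Rightarrow> 'e list \<Rightarrow> bool" where
  "universal_evol V Ed x xs es \<longleftrightarrow> full_evol V Ed x xs es \<and>
     (\<forall>ys fs. full_evol V Ed x ys fs \<longrightarrow> embeds V Ed xs ys)"

definition phylogenetic_vertex :: "'v set \<Rightarrow> ('v \<Rightarrow> 'v \<Rightarrow> 'e set) \<Rightarrow> 'v \<Rightarrow> bool" where
  "phylogenetic_vertex V Ed x \<longleftrightarrow> (\<exists>xs es. universal_evol V Ed x xs es)"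

definition monotonous :: "'v set \<Rightarrow> ('v \<Rightarrow> 'v \<Rightarrow> 'e set) \<Rightarrow> bool" where
  "monotonous V Ed \<longleftrightarrow> (\<forall>a\<in>V. \<forall>b\<in>V. Ed a b \<noteq> {} \<longrightarrow> height V Ed a \<ge> height V Ed b)"

text \<open>Smallness (isotypy classes form a set) holds automatically in HOL.\<close>
definition phylogenetic_quiver :: "'v set \<Rightarrow> ('v \<Rightarrow> 'v \<Rightarrow> 'e set) \<Rightarrow> bool" where
  "phylogenetic_quiver V Ed \<longleftrightarrow> monotonous V Ed \<and> (\<forall>x\<in>V. phylogenetic_vertex V Ed x)"

definition clade_V :: "'v set \<Rightarrow> ('v \<Rightarrow> 'v \<Rightarrow> 'e set) \<Rightarrow> 'v \<Rightarrow> 'v set" where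
  "clade_V V Ed a = {b. anc V Ed a b}"

definition clade_E :: "'v set \<Rightarrow> ('v \<Rightarrow> 'v \<Rightarrow> 'e set) \<Rightarrow> 'v \<Rightarrow> 'v \<Rightarrow> 'v \<Rightarrow> 'e set" where
  "clade_E V Ed a x y = (if x \<in> clade_V V Ed a \<and> y \<in> clade_V V Ed a then Ed x y else {})"

definition regular :: "'v set \<Rightarrow> ('v \<Rightarrow> 'v \<Rightarrow> 'e set) \<Rightarrow> 'v \<Rightarrow> bool" where
  "regular V Ed a \<longleftrightarrow> a \<in> V \<and>
     (\<forall>b \<in> clade_V V Ed a. height V Ed b = height V Ed a \<longrightarrow> Ed b a \<noteq> {})"

end

theory Submission
  imports Defs
begin

text \<open>Let a be the height of A and U a universal evolution of a descendant X of A. Every full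
  evolution F of X inside the clade starts at a vertex isotypic to A; prefixing F by a shortest full
  evolution of its initial vertex yields a full evolution of X in the whole quiver, into which U
  embeds, and the last length U - a entries of U must land in F. Hence the tail of U from
  position a embeds into every full evolution of X in the clade. The vertex U ! a is a descendant
  of A of height a, so regularity provides an edge U ! a \<rightarrow> A; prepending A when U ! a is not
  isotypic to A turns the tail into a full, hence universal, evolution of X in the clade. Its
  length gives the clade height of X explicitly, and monotonicity follows by comparing these
  lengths along an edge.\<close>

text \<open>Ancestry, heights and embeddings only depend on the vertex sequence of an evolution, so we
  work with vertex lists whose consecutive entries are joined by some edge.\<close>

definition evol_seq :: "'v set \<Rightarrow> ('v \<Rightarrow> 'v \<Rightarrow> 'e set) \<Rightarrow> 'v list \<Rightarrow> bool" where
  "evol_seq V Ed xs \<longleftrightarrow> xs \<noteq> [] \<and> set xs \<subseteq> V \<and> successively (\<lambda>x y. Ed y x \<noteq> {}) xs"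

definition full_evol_seq :: "'v set \<Rightarrow> ('v \<Rightarrow> 'v \<Rightarrow> 'e set) \<Rightarrow> 'v \<Rightarrow> 'v list \<Rightarrow> bool" where
  "full_evol_seq V Ed x xs \<longleftrightarrow> evol_seq V Ed xs \<and> primitive V Ed (hd xs) \<and> last xs = x"

definition universal_evol_seq :: "'v set \<Rightarrow> ('v \<Rightarrow> 'v \<Rightarrow> 'e set) \<Rightarrow> 'v \<Rightarrow> 'v list \<Rightarrow> bool" where
  "universal_evol_seq V Ed x xs \<longleftrightarrow>
     full_evol_seq V Ed x xs \<and> (\<forall>ys. full_evol_seq V Ed x ys \<longrightarrow> embeds V Ed xs ys)"

lemma evol_imp_evol_seq: "evol V Ed xs es \<Longrightarrow> evol_seq V Ed xs"
  unfolding evol_def evol_seq_def successively_conv_nth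
  by (metis Suc_eq_plus1 empty_iff less_diff_conv)

lemma evol_seq_imp_evol:
  assumes "evol_seq V Ed xs"
  shows "\<exists>es. evol V Ed xs es"
proof -
  define es where "es = map (\<lambda>k. SOME e. e \<in> Ed (xs ! Suc k) (xs ! k)) [0..<length xs - 1]"
  have "es ! k \<in> Ed (xs ! (k + 1)) (xs ! k)" if "k < length es" for k
  proof -
    have "Ed (xs ! Suc k) (xs ! k) \<noteq> {}"
      using assms that successively_nth unfolding evol_seq_def es_def by fastforce
    then show ?thesis
      using that unfolding es_def by (simp add: some_in_eq)
  qed
  then have "evol V Ed xs es"
    using assms unfolding evol_def evol_seq_def es_def by auto
  then show ?thesis ..
qed

lemma anc_iff_evol_seq: "anc V Ed a b \<longleftrightarrow> (\<exists>xs. evol_seq V Ed xs \<and> hd xs = a \<and> last xs = b)"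
  unfolding anc_def by (metis evol_imp_evol_seq evol_seq_imp_evol)

lemma ex_full_evol_iff: "(\<exists>es. full_evol V Ed x xs es) \<longleftrightarrow> full_evol_seq V Ed x xs"
  unfolding full_evol_def full_evol_seq_def by (meson evol_imp_evol_seq evol_seq_imp_evol)

lemma height_eq_Least_full_evol_seq:
  "height V Ed x = (if \<exists>xs. full_evol_seq V Ed x xs
     then enat (LEAST m. \<exists>xs. full_evol_seq V Ed x xs \<and> length xs - 1 = m) else \<infinity>)"
  unfolding height_def by (simp add: ex_full_evol_iff[symmetric])

lemma phylogenetic_vertex_iff: "phylogenetic_vertex V Ed x \<longleftrightarrow> (\<exists>xs. universal_evol_seq V Ed x xs)"
  unfolding phylogenetic_vertex_def universal_evol_def universal_evol_seq_def
  by (metis ex_full_evol_iff)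

lemma evol_seq_append:
  assumes "evol_seq V Ed xs" "evol_seq V Ed ys" "last xs = hd ys"
  shows "evol_seq V Ed (butlast xs @ ys)"
proof -
  let ?P = "\<lambda>x y. Ed y x \<noteq> {}"
  have "successively ?P (butlast xs @ [last xs])"
    using assms(1) unfolding evol_seq_def by simp
  then have "successively ?P (butlast xs)" "butlast xs = [] \<or> ?P (last (butlast xs)) (hd ys)"
    using assms(3) by (simp_all add: successively_append_iff)
  then have "successively ?P (butlast xs @ ys)"
    using assms(2) unfolding evol_seq_def by (simp add: successively_append_iff)
  moreover have "set (butlast xs) \<subseteq> V"
    using assms(1) unfolding evol_seq_def by (meson in_set_butlastD subset_iff)
  ultimately show ?thesis
    using assms(2) unfolding evol_seq_def by simp
qed

lemma evol_seq_Cons: "evol_seq V Ed xs \<Longrightarrow> x \<in> V \<Longrightarrow> Ed (hd xs) x \<noteq> {} \<Longrightarrow> evol_seq V Ed (x # xs)"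
  by (auto simp: evol_seq_def successively_Cons)

lemma evol_seq_snoc:
  "evol_seq V Ed xs \<Longrightarrow> y \<in> V \<Longrightarrow> Ed y (last xs) \<noteq> {} \<Longrightarrow> evol_seq V Ed (xs @ [y])"
  by (auto simp: evol_seq_def successively_append_iff)

lemma evol_seq_take: "evol_seq V Ed xs \<Longrightarrow> 0 < n \<Longrightarrow> evol_seq V Ed (take n xs)"
  unfolding evol_seq_def
  by (metis append_take_drop_id successively_append_iff set_take_subset order_trans take_eq_Nil
      not_gr0)

lemma evol_seq_drop: "evol_seq V Ed xs \<Longrightarrow> n < length xs \<Longrightarrow> evol_seq V Ed (drop n xs)"
  unfolding evol_seq_def
  by (metis append_take_drop_id successively_append_iff set_drop_subset order_trans drop_eq_Nil
      not_le)

lemma anc_nth: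
  assumes "evol_seq V Ed xs" "i \<le> j" "j < length xs"
  shows "anc V Ed (xs ! i) (xs ! j)"
proof -
  let ?ys = "take (Suc (j - i)) (drop i xs)"
  have "evol_seq V Ed ?ys"
    using assms by (simp add: evol_seq_take evol_seq_drop)
  moreover have "hd ?ys = xs ! i" "last ?ys = xs ! j"
    using assms by (simp_all add: hd_drop_conv_nth last_conv_nth)
  ultimately show ?thesis
    unfolding anc_iff_evol_seq by blast
qed

lemma anc_refl: "a \<in> V \<Longrightarrow> anc V Ed a a"
  unfolding anc_iff_evol_seq by (rule exI[of _ "[a]"]) (simp add: evol_seq_def)

lemma anc_in_V: "anc V Ed a b \<Longrightarrow> a \<in> V \<and> b \<in> V"
  unfolding anc_iff_evol_seq evol_seq_def by auto

lemma hd_butlast_append: "xs \<noteq> [] \<Longrightarrow> last xs = hd ys \<Longrightarrow> hd (butlast xs @ ys) = hd xs"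
  by (cases xs rule: rev_cases) (auto simp: hd_append)

lemma anc_trans: "anc V Ed a b \<Longrightarrow> anc V Ed b c \<Longrightarrow> anc V Ed a c"
proof -
  assume "anc V Ed a b" "anc V Ed b c"
  then obtain xs ys where xs: "evol_seq V Ed xs" "hd xs = a" "last xs = b"
    and ys: "evol_seq V Ed ys" "hd ys = b" "last ys = c"
    unfolding anc_iff_evol_seq by blast
  have "evol_seq V Ed (butlast xs @ ys)"
    using evol_seq_append[OF xs(1) ys(1)] xs(3) ys(2) by simp
  moreover have "hd (butlast xs @ ys) = a"
    using hd_butlast_append[of xs ys] xs ys unfolding evol_seq_def by simp
  moreover have "last (butlast xs @ ys) = c"
    using ys unfolding evol_seq_def by simp
  ultimately show ?thesis
    unfolding anc_iff_evol_seq by blast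
qed

lemma isotypic_refl: "a \<in> V \<Longrightarrow> isotypic V Ed a a"
  by (simp add: isotypic_def anc_refl)

lemma isotypic_sym: "isotypic V Ed a b \<Longrightarrow> isotypic V Ed b a"
  unfolding isotypic_def by blast

lemma isotypic_trans: "isotypic V Ed a b \<Longrightarrow> isotypic V Ed b c \<Longrightarrow> isotypic V Ed a c"
  unfolding isotypic_def using anc_trans[of V Ed a b c] anc_trans[of V Ed c b a] by blast

lemma full_evol_seq_append:
  assumes "full_evol_seq V Ed y xs" "evol_seq V Ed ys" "hd ys = y"
  shows "full_evol_seq V Ed (last ys) (butlast xs @ ys)"
proof -
  have "xs \<noteq> []" "ys \<noteq> []" "last xs = hd ys"
    using assms unfolding full_evol_seq_def evol_seq_def by auto
  moreover have "evol_seq V Ed (butlast xs @ ys)"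
    using evol_seq_append assms \<open>last xs = hd ys\<close> unfolding full_evol_seq_def by blast
  ultimately show ?thesis
    using assms(1) hd_butlast_append[of xs ys] unfolding full_evol_seq_def by simp
qed

lemma height_mono_evol_seq:
  assumes "monotonous V Ed" "evol_seq V Ed xs"
  shows "height V Ed (hd xs) \<le> height V Ed (last xs)"
  using assms(2)
proof (induction xs)
  case (Cons x xs)
  show ?case
  proof (cases "xs = []")
    case False
    then have "evol_seq V Ed xs" "Ed (hd xs) x \<noteq> {}"
      using Cons.prems unfolding evol_seq_def by (auto simp: successively_Cons)
    moreover have "x \<in> V" "hd xs \<in> V"
      using Cons.prems hd_in_set[OF False] unfolding evol_seq_def by auto
    ultimately have "height V Ed x \<le> height V Ed (hd xs)"
      using assms(1) unfolding monotonous_def by blast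
    also have "\<dots> \<le> height V Ed (last xs)"
      using Cons.IH \<open>evol_seq V Ed xs\<close> .
    finally show ?thesis
      using False by simp
  qed simp
qed (simp add: evol_seq_def)

lemma height_mono_anc: "monotonous V Ed \<Longrightarrow> anc V Ed a b \<Longrightarrow> height V Ed a \<le> height V Ed b"
  unfolding anc_iff_evol_seq using height_mono_evol_seq by blast

lemma height_isotypic: "monotonous V Ed \<Longrightarrow> isotypic V Ed a b \<Longrightarrow> height V Ed a = height V Ed b"
  unfolding isotypic_def by (meson height_mono_anc order_antisym)

lemma height_le_full_evol_seq: "full_evol_seq V Ed x xs \<Longrightarrow> height V Ed x \<le> enat (length xs - 1)"
  unfolding height_eq_Least_full_evol_seq by (auto intro: Least_le)

lemma height_enatE:
  assumes "height V Ed x = enat n"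
  obtains xs where "full_evol_seq V Ed x xs" "length xs = Suc n"
proof -
  have ex: "\<exists>xs. full_evol_seq V Ed x xs"
    using assms unfolding height_eq_Least_full_evol_seq by (auto split: if_splits)
  then have "n = (LEAST m. \<exists>xs. full_evol_seq V Ed x xs \<and> length xs - 1 = m)"
    using assms unfolding height_eq_Least_full_evol_seq by simp
  then obtain xs where "full_evol_seq V Ed x xs" "length xs - 1 = n"
    using LeastI_ex[of "\<lambda>m. \<exists>xs. full_evol_seq V Ed x xs \<and> length xs - 1 = m"] ex by blast
  moreover from this have "xs \<noteq> []"
    unfolding full_evol_seq_def evol_seq_def by blast
  ultimately show ?thesis
    using that by (metis Suc_diff_1 length_greater_0_conv)
qed

lemma height_universal_evol_seq:
  assumes "universal_evol_seq V Ed x xs"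
  shows "height V Ed x = enat (length xs - 1)"
proof -
  have le: "height V Ed x \<le> enat (length xs - 1)"
    using assms height_le_full_evol_seq[of V Ed x xs] unfolding universal_evol_seq_def by blast
  then obtain n where n: "height V Ed x = enat n"
    by (cases "height V Ed x") auto
  then obtain ys where "full_evol_seq V Ed x ys" "length ys = Suc n"
    by (rule height_enatE)
  then have "length xs \<le> Suc n"
    using assms unfolding universal_evol_seq_def embeds_def by metis
  then show ?thesis
    using le n by simp
qed

lemma strict_mono_on_lessThan_ge:
  fixes r :: "nat \<Rightarrow> nat"
  assumes "strict_mono_on {..<n} r" "k < n"
  shows "k \<le> r k"
  using assms(2)
proof (induction k)
  case (Suc k)
  then have "r k < r (Suc k)"
    using strict_mono_onD[OF assms(1)] by simp
  with Suc show ?case by simp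
qed simp

lemma embedsI:
  assumes "strict_mono_on {..<length xs} r"
    and "\<And>k. k < length xs \<Longrightarrow> r k < length ys \<and> isotypic V Ed (xs ! k) (ys ! r k)"
  shows "embeds V Ed xs ys"
proof -
  have "length xs \<le> length ys"
  proof (cases xs rule: rev_cases)
    case (snoc zs z)
    then have "length xs - 1 \<le> r (length xs - 1)" "r (length xs - 1) < length ys"
      using strict_mono_on_lessThan_ge[OF assms(1)] assms(2) by simp_all
    then show ?thesis by simp
  qed simp
  then show ?thesis
    unfolding embeds_def using assms by blast
qed

lemma embeds_drop:
  assumes "embeds V Ed xs ys"
  shows "embeds V Ed (drop n xs) (drop n ys)"
proof -
  obtain r where r: "strict_mono_on {..<length xs} r"
    "\<And>k. k < length xs \<Longrightarrow> r k < length ys \<and> isotypic V Ed (xs ! k) (ys ! r k)"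
    using assms unfolding embeds_def by blast
  have ge: "n \<le> r (k + n)" if "k + n < length xs" for k
    using strict_mono_on_lessThan_ge[OF r(1) that] by simp
  show ?thesis
  proof (rule embedsI[where r = "\<lambda>k. r (k + n) - n"])
    show "strict_mono_on {..<length (drop n xs)} (\<lambda>k. r (k + n) - n)"
    proof (rule strict_mono_onI)
      fix i j assume "i \<in> {..<length (drop n xs)}" "j \<in> {..<length (drop n xs)}" "i < j"
      then have "n \<le> r (i + n)" "r (i + n) < r (j + n)"
        using ge strict_mono_onD[OF r(1), of "i + n" "j + n"] by auto
      then show "r (i + n) - n < r (j + n) - n"
        by simp
    qed
  next
    fix k assume "k < length (drop n xs)"
    then have "k + n < length xs" "n \<le> r (k + n)" "r (k + n) < length ys"
      "isotypic V Ed (xs ! (k + n)) (ys ! r (k + n))"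
      using r(2)[of "k + n"] ge[of k] by simp_all
    then show "r (k + n) - n < length (drop n ys) \<and>
        isotypic V Ed (drop n xs ! k) (drop n ys ! (r (k + n) - n))"
      by (simp add: add.commute diff_less_mono)
  qed
qed

lemma embeds_tl:
  assumes "embeds V Ed xs ys" "xs \<noteq> []" "\<not> isotypic V Ed (hd xs) (hd ys)"
  shows "embeds V Ed xs (tl ys)"
proof -
  obtain r where r: "strict_mono_on {..<length xs} r"
    "\<And>k. k < length xs \<Longrightarrow> r k < length ys \<and> isotypic V Ed (xs ! k) (ys ! r k)"
    using assms unfolding embeds_def by blast
  have "0 < r 0"
    using r(2)[of 0] assms(2,3) by (metis gr0I hd_conv_nth length_greater_0_conv list.size(3) not_less0)
  then have pos: "0 < r k" if "k < length xs" for k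
    using that strict_mono_on_leD[OF r(1), of 0 k]
    by (metis lessThan_iff le0 le_less_trans order_less_le_trans)
  show ?thesis
  proof (rule embedsI[where r = "\<lambda>k. r k - 1"])
    show "strict_mono_on {..<length xs} (\<lambda>k. r k - 1)"
    proof (rule strict_mono_onI)
      fix i j assume "i \<in> {..<length xs}" "j \<in> {..<length xs}" "i < j"
      then have "0 < r i" "r i < r j"
        using pos strict_mono_onD[OF r(1)] by auto
      then show "r i - 1 < r j - 1"
        by simp
    qed
  next
    fix k assume "k < length xs"
    then have "0 < r k" "r k < length ys" "isotypic V Ed (xs ! k) (ys ! r k)"
      using r(2)[of k] pos[of k] by simp_all
    moreover from this have "tl ys ! (r k - 1) = ys ! r k"
      by (simp add: nth_tl)
    ultimately show "r k - 1 < length (tl ys) \<and> isotypic V Ed (xs ! k) (tl ys ! (r k - 1))"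
      by simp
  qed
qed

lemma embeds_Cons:
  assumes "embeds V Ed xs (tl ys)" "ys \<noteq> []" "isotypic V Ed x (hd ys)"
  shows "embeds V Ed (x # xs) ys"
proof -
  obtain r where r: "strict_mono_on {..<length xs} r"
    "\<And>k. k < length xs \<Longrightarrow> r k < length (tl ys) \<and> isotypic V Ed (xs ! k) (tl ys ! r k)"
    using assms unfolding embeds_def by blast
  let ?r = "\<lambda>k. case k of 0 \<Rightarrow> 0 | Suc j \<Rightarrow> Suc (r j)"
  show ?thesis
  proof (rule embedsI[where r = ?r])
    show "strict_mono_on {..<length (x # xs)} ?r"
      using strict_mono_onD[OF r(1)] by (intro strict_mono_onI) (auto split: nat.splits)
  next
    fix k assume k: "k < length (x # xs)"
    show "?r k < length ys \<and> isotypic V Ed ((x # xs) ! k) (ys ! ?r k)"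
    proof (cases k)
      case 0
      then show ?thesis
        using assms(2,3) by (simp add: hd_conv_nth)
    next
      case (Suc j)
      then have "r j < length (tl ys)" "isotypic V Ed (xs ! j) (tl ys ! r j)"
        using r(2) k by simp_all
      then show ?thesis
        using Suc by (simp add: nth_tl)
    qed
  qed
qed

lemma anc_hd_embeds:
  assumes "evol_seq V Ed ys" "embeds V Ed xs ys" "xs \<noteq> []"
  shows "anc V Ed (hd ys) (hd xs)"
proof -
  obtain j where "j < length ys" "isotypic V Ed (hd xs) (ys ! j)"
    using assms(2,3) unfolding embeds_def by (metis hd_conv_nth length_greater_0_conv)
  moreover have "hd ys = ys ! 0"
    using assms(1) unfolding evol_seq_def by (simp add: hd_conv_nth)
  ultimately show ?thesis
    using anc_nth[OF assms(1), of 0 j] anc_trans[of V Ed "hd ys" "ys ! j" "hd xs"]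
    unfolding isotypic_def by simp
qed

context
  fixes V :: "'v set" and Ed :: "'v \<Rightarrow> 'v \<Rightarrow> 'e set" and A :: 'v
begin

abbreviation (input) "VA \<equiv> clade_V V Ed A"
abbreviation (input) "EA \<equiv> clade_E V Ed A"

lemma clade_V_subset: "VA \<subseteq> V"
  unfolding clade_V_def using anc_in_V[of V Ed A] by blast

lemma clade_V_closed: "x \<in> VA \<Longrightarrow> anc V Ed x y \<Longrightarrow> y \<in> VA"
  unfolding clade_V_def using anc_trans[of V Ed A x y] by simp

lemma isotypic_imp_in_clade_V: "isotypic V Ed x A \<Longrightarrow> x \<in> VA"
  unfolding clade_V_def isotypic_def by simp

lemma evol_seq_subset_clade_V:
  assumes "evol_seq V Ed xs" "hd xs \<in> VA"
  shows "set xs \<subseteq> VA"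
proof
  fix y assume "y \<in> set xs"
  then obtain k where "k < length xs" "y = xs ! k"
    by (metis in_set_conv_nth)
  moreover have "hd xs = xs ! 0"
    using assms(1) unfolding evol_seq_def by (simp add: hd_conv_nth)
  ultimately show "y \<in> VA"
    using anc_nth[OF assms(1), of 0 k] clade_V_closed[of "hd xs" y] assms(2) by simp
qed

lemma evol_seq_clade_iff: "evol_seq VA EA xs \<longleftrightarrow> evol_seq V Ed xs \<and> set xs \<subseteq> VA"
proof (cases "set xs \<subseteq> VA")
  case True
  then have "successively (\<lambda>x y. EA y x \<noteq> {}) xs \<longleftrightarrow> successively (\<lambda>x y. Ed y x \<noteq> {}) xs"
    unfolding clade_E_def by (intro successively_cong) auto
  moreover have "set xs \<subseteq> V"
    using True clade_V_subset by blast
  ultimately show ?thesis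
    using True unfolding evol_seq_def by simp
next
  case False
  then show ?thesis
    unfolding evol_seq_def by simp
qed

lemma anc_clade_iff: "anc VA EA x y \<longleftrightarrow> x \<in> VA \<and> anc V Ed x y"
proof
  assume "anc VA EA x y"
  then obtain xs where xs: "evol_seq V Ed xs" "set xs \<subseteq> VA" "hd xs = x" "last xs = y"
    unfolding anc_iff_evol_seq evol_seq_clade_iff by blast
  then have "x \<in> VA"
    using hd_in_set unfolding evol_seq_def by blast
  with xs show "x \<in> VA \<and> anc V Ed x y"
    unfolding anc_iff_evol_seq by blast
next
  assume "x \<in> VA \<and> anc V Ed x y"
  then obtain xs where "evol_seq V Ed xs" "hd xs = x" "last xs = y" "x \<in> VA"
    unfolding anc_iff_evol_seq by blast
  then show "anc VA EA x y"
    unfolding anc_iff_evol_seq evol_seq_clade_iff using evol_seq_subset_clade_V by blast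
qed

lemma isotypic_clade_iff: "isotypic VA EA x y \<longleftrightarrow> x \<in> VA \<and> isotypic V Ed x y"
  unfolding isotypic_def anc_clade_iff using clade_V_closed by blast

lemma primitive_clade_iff:
  assumes "A \<in> V"
  shows "primitive VA EA x \<longleftrightarrow> isotypic V Ed x A"
proof
  assume prim: "primitive VA EA x"
  have "A \<in> VA" "anc V Ed A x"
    using anc_refl[OF assms] prim unfolding primitive_def clade_V_def by simp_all
  then have "anc VA EA A x"
    unfolding anc_clade_iff by simp
  then have "isotypic VA EA A x"
    using prim unfolding primitive_def by blast
  then have "isotypic V Ed A x"
    unfolding isotypic_clade_iff by simp
  then show "isotypic V Ed x A"
    by (rule isotypic_sym)
next
  assume iso: "isotypic V Ed x A"
  have "isotypic VA EA b x" if "anc VA EA b x" for b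
  proof -
    have "b \<in> VA" "anc V Ed b x"
      using that unfolding anc_clade_iff by simp_all
    moreover have "anc V Ed x b"
      using iso \<open>b \<in> VA\<close> anc_trans[of V Ed x A b] unfolding isotypic_def clade_V_def by simp
    ultimately show ?thesis
      unfolding isotypic_clade_iff by (simp add: isotypic_def)
  qed
  then show "primitive VA EA x"
    using iso isotypic_imp_in_clade_V unfolding primitive_def by blast
qed

lemma embeds_clade_iff:
  assumes "set xs \<subseteq> VA"
  shows "embeds VA EA xs ys \<longleftrightarrow> embeds V Ed xs ys"
proof -
  have iso: "isotypic VA EA (xs ! k) z \<longleftrightarrow> isotypic V Ed (xs ! k) z" if "k < length xs" for k z
    using assms that nth_mem isotypic_clade_iff by blast
  show ?thesis
    unfolding embeds_def by (auto simp: iso)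
qed

lemma full_evol_seq_clade_iff:
  assumes "A \<in> V"
  shows "full_evol_seq VA EA x xs \<longleftrightarrow> evol_seq V Ed xs \<and> isotypic V Ed (hd xs) A \<and> last xs = x"
proof -
  have "set xs \<subseteq> VA" if "evol_seq V Ed xs" "isotypic V Ed (hd xs) A"
    using that evol_seq_subset_clade_V isotypic_imp_in_clade_V by blast
  then show ?thesis
    unfolding full_evol_seq_def evol_seq_clade_iff primitive_clade_iff[OF assms] by auto
qed

context
  fixes a :: nat
  assumes phylogenetic: "phylogenetic_quiver V Ed"
    and regular: "regular V Ed A"
    and height_A: "height V Ed A = enat a"
begin

lemma A_in_V: "A \<in> V"
  using regular unfolding regular_def by blast

lemma monotonous_quiver: "monotonous V Ed"
  using phylogenetic unfolding phylogenetic_quiver_def by blast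

lemma ex_universal_evol_seq: "x \<in> V \<Longrightarrow> \<exists>U. universal_evol_seq V Ed x U"
  using phylogenetic unfolding phylogenetic_quiver_def phylogenetic_vertex_iff by blast

lemma embeds_drop_full_evol_seq_clade:
  assumes U: "universal_evol_seq V Ed X U" and F: "full_evol_seq VA EA X F"
  shows "embeds V Ed (drop a U) F"
proof -
  have F': "evol_seq V Ed F" "isotypic V Ed (hd F) A" "last F = X"
    using F unfolding full_evol_seq_clade_iff[OF A_in_V] by simp_all
  have "height V Ed (hd F) = enat a"
    using height_isotypic[OF monotonous_quiver F'(2)] height_A by simp
  then obtain Q where Q: "full_evol_seq V Ed (hd F) Q" "length Q = Suc a"
    by (rule height_enatE)
  have "full_evol_seq V Ed X (butlast Q @ F)"
    using full_evol_seq_append[OF Q(1) F'(1)] F'(3) by simp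
  then have "embeds V Ed U (butlast Q @ F)"
    using U unfolding universal_evol_seq_def by blast
  then have "embeds V Ed (drop a U) (drop a (butlast Q @ F))"
    by (rule embeds_drop)
  then show ?thesis
    using Q(2) by simp
qed

lemma universal_evol_seq_length_gt:
  assumes "X \<in> VA" "universal_evol_seq V Ed X U"
  shows "a < length U"
proof -
  have "enat a \<le> height V Ed X"
    using height_mono_anc[OF monotonous_quiver] assms(1) height_A unfolding clade_V_def by force
  also have "\<dots> = enat (length U - 1)"
    using height_universal_evol_seq[OF assms(2)] .
  finally have "a \<le> length U - 1"
    by simp
  moreover have "U \<noteq> []"
    using assms(2) unfolding universal_evol_seq_def full_evol_seq_def evol_seq_def by blast
  ultimately show ?thesis
    by (cases U) auto
qed

lemma universal_evol_seq_nth_in_clade: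
  assumes "X \<in> VA" "universal_evol_seq V Ed X U"
  shows "U ! a \<in> VA"
proof -
  obtain P where P: "evol_seq V Ed P" "hd P = A" "last P = X"
    using assms(1) unfolding clade_V_def anc_iff_evol_seq by blast
  have "full_evol_seq VA EA X P"
    unfolding full_evol_seq_clade_iff[OF A_in_V] using P isotypic_refl[OF A_in_V] by simp
  then have "embeds V Ed (drop a U) P"
    by (rule embeds_drop_full_evol_seq_clade[OF assms(2)])
  moreover have "drop a U \<noteq> []" "hd (drop a U) = U ! a"
    using universal_evol_seq_length_gt[OF assms] by (simp_all add: hd_drop_conv_nth)
  ultimately have "anc V Ed A (U ! a)"
    using anc_hd_embeds[OF P(1)] P(2) by fastforce
  then show ?thesis
    unfolding clade_V_def by simp
qed

lemma height_universal_evol_seq_nth: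
  assumes "X \<in> VA" "universal_evol_seq V Ed X U"
  shows "height V Ed (U ! a) = enat a"
proof (rule order_antisym)
  have lt: "a < length U"
    using universal_evol_seq_length_gt[OF assms] .
  then have "last (take (Suc a) U) = U ! a"
    by (simp add: take_Suc_conv_app_nth)
  moreover have "evol_seq V Ed (take (Suc a) U)"
    using assms(2) evol_seq_take[of V Ed U "Suc a"] unfolding universal_evol_seq_def full_evol_seq_def
    by simp
  ultimately have "full_evol_seq V Ed (U ! a) (take (Suc a) U)"
    using assms(2) unfolding universal_evol_seq_def full_evol_seq_def by simp
  then show "height V Ed (U ! a) \<le> enat a"
    using height_le_full_evol_seq lt by fastforce
  show "enat a \<le> height V Ed (U ! a)"
    using height_mono_anc[OF monotonous_quiver] universal_evol_seq_nth_in_clade[OF assms] height_A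
    unfolding clade_V_def by force
qed

lemma edge_universal_evol_seq_nth:
  assumes "X \<in> VA" "universal_evol_seq V Ed X U"
  shows "Ed (U ! a) A \<noteq> {}"
  using regular universal_evol_seq_nth_in_clade[OF assms] height_universal_evol_seq_nth[OF assms]
    height_A unfolding regular_def by simp

lemma universal_evol_seq_clade:
  assumes X: "X \<in> VA" and U: "universal_evol_seq V Ed X U"
  shows "universal_evol_seq VA EA X (if isotypic V Ed (U ! a) A then drop a U else A # drop a U)"
    (is "universal_evol_seq _ _ _ ?W")
proof -
  let ?D = "drop a U"
  have lt: "a < length U"
    using universal_evol_seq_length_gt[OF X U] .
  have D: "evol_seq V Ed ?D" "?D \<noteq> []" "hd ?D = U ! a" "last ?D = X"
    using U lt evol_seq_drop[of V Ed U a] unfolding universal_evol_seq_def full_evol_seq_def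
    by (simp_all add: hd_drop_conv_nth)
  have full: "full_evol_seq VA EA X ?W"
  proof (cases "isotypic V Ed (U ! a) A")
    case True
    then show ?thesis
      unfolding full_evol_seq_clade_iff[OF A_in_V] using D by simp
  next
    case False
    have "evol_seq V Ed (A # ?D)"
      using evol_seq_Cons[OF D(1) A_in_V] D(3) edge_universal_evol_seq_nth[OF X U] by simp
    then show ?thesis
      unfolding full_evol_seq_clade_iff[OF A_in_V] using False D(2,4) isotypic_refl[OF A_in_V] by simp
  qed
  have "embeds VA EA ?W F" if F: "full_evol_seq VA EA X F" for F
  proof -
    have embeds_D: "embeds V Ed ?D F"
      using embeds_drop_full_evol_seq_clade[OF U F] .
    have hd_F: "F \<noteq> []" "isotypic V Ed (hd F) A"
      using F unfolding full_evol_seq_clade_iff[OF A_in_V] evol_seq_def by simp_all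
    have "embeds V Ed ?W F"
    proof (cases "isotypic V Ed (U ! a) A")
      case True
      then show ?thesis
        using embeds_D by simp
    next
      case False
      then have "\<not> isotypic V Ed (hd ?D) (hd F)"
        using D(3) hd_F(2) isotypic_trans[of V Ed "U ! a" "hd F" A] by auto
      then have "embeds V Ed ?D (tl F)"
        using embeds_tl[OF embeds_D D(2)] by simp
      moreover have "isotypic V Ed A (hd F)"
        using isotypic_sym[OF hd_F(2)] .
      ultimately have "embeds V Ed (A # ?D) F"
        using embeds_Cons[of V Ed ?D F A] hd_F(1) by simp
      then show ?thesis
        using False by simp
    qed
    moreover have "set ?W \<subseteq> VA"
      using full unfolding full_evol_seq_def evol_seq_clade_iff by simp
    ultimately show ?thesis
      using embeds_clade_iff[of ?W F] by simp
  qed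
  then show ?thesis
    using full unfolding universal_evol_seq_def by simp
qed

lemma height_clade:
  assumes "X \<in> VA" "universal_evol_seq V Ed X U"
  shows "height VA EA X = enat (length U - a - (if isotypic V Ed (U ! a) A then 1 else 0))"
  using height_universal_evol_seq[OF universal_evol_seq_clade[OF assms]]
    universal_evol_seq_length_gt[OF assms] by simp

text \<open>UY @ [X] is a full evolution of X, so UX embeds into it and UX ! a is a descendant of UY ! a.\<close>

lemma isotypic_universal_evol_seq_nth_edge:
  assumes X: "X \<in> VA" and Y: "Y \<in> VA" and edge: "Ed X Y \<noteq> {}"
    and UX: "universal_evol_seq V Ed X UX" and UY: "universal_evol_seq V Ed Y UY"
    and iso: "isotypic V Ed (UX ! a) A"
  shows "isotypic V Ed (UY ! a) A"
proof -
  let ?G = "UY @ [X]"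
  have lt: "a < length UX" "a < length UY"
    using universal_evol_seq_length_gt X Y UX UY by blast+
  have UY': "evol_seq V Ed UY" "UY \<noteq> []" "primitive V Ed (hd UY)" "last UY = Y"
    using UY unfolding universal_evol_seq_def full_evol_seq_def evol_seq_def by blast+
  have "evol_seq V Ed ?G"
    using evol_seq_snoc[OF UY'(1)] X clade_V_subset edge UY'(4) by blast
  then have G: "full_evol_seq V Ed X ?G" "evol_seq V Ed (drop a ?G)" "hd (drop a ?G) = UY ! a"
    using UY'(2,3) lt(2) evol_seq_drop[of V Ed ?G a] unfolding full_evol_seq_def
    by (simp_all add: hd_drop_conv_nth nth_append)
  have "embeds V Ed (drop a UX) (drop a ?G)"
    using UX G(1) embeds_drop unfolding universal_evol_seq_def by blast
  moreover have "drop a UX \<noteq> []" "hd (drop a UX) = UX ! a"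
    using lt(1) by (simp_all add: hd_drop_conv_nth)
  ultimately have "anc V Ed (UY ! a) (UX ! a)"
    using anc_hd_embeds[OF G(2)] G(3) by fastforce
  then have "anc V Ed (UY ! a) A"
    using iso anc_trans[of V Ed "UY ! a" "UX ! a" A] unfolding isotypic_def by simp
  moreover have "anc V Ed A (UY ! a)"
    using universal_evol_seq_nth_in_clade[OF Y UY] unfolding clade_V_def by simp
  ultimately show ?thesis
    unfolding isotypic_def by blast
qed

lemma monotonous_clade: "monotonous VA EA"
  unfolding monotonous_def
proof (intro ballI impI)
  fix X Y assume X: "X \<in> VA" and Y: "Y \<in> VA" and "EA X Y \<noteq> {}"
  then have edge: "Ed X Y \<noteq> {}"
    unfolding clade_E_def by simp
  obtain UX UY where UX: "universal_evol_seq V Ed X UX" and UY: "universal_evol_seq V Ed Y UY"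
    using ex_universal_evol_seq X Y clade_V_subset by blast
  have "height V Ed Y \<le> height V Ed X"
    using monotonous_quiver edge X Y clade_V_subset unfolding monotonous_def by blast
  then have "length UY \<le> length UX"
    using height_universal_evol_seq[OF UX] height_universal_evol_seq[OF UY]
      universal_evol_seq_length_gt[OF X UX] universal_evol_seq_length_gt[OF Y UY] by simp
  moreover have "a < length UY"
    using universal_evol_seq_length_gt[OF Y UY] .
  moreover have "isotypic V Ed (UX ! a) A \<Longrightarrow> isotypic V Ed (UY ! a) A"
    using isotypic_universal_evol_seq_nth_edge[OF X Y edge UX UY] .
  ultimately show "height VA EA Y \<le> height VA EA X"
    unfolding height_clade[OF X UX] height_clade[OF Y UY] by auto
qed

lemma phylogenetic_vertex_clade: "X \<in> VA \<Longrightarrow> phylogenetic_vertex VA EA X"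
  unfolding phylogenetic_vertex_iff
  using ex_universal_evol_seq universal_evol_seq_clade clade_V_subset by blast

end

end

theorem theorem9p4:
  fixes V :: "'v set" and Ed :: "'v \<Rightarrow> 'v \<Rightarrow> 'e set" and A :: 'v
  assumes "phylogenetic_quiver V Ed"
    and "regular V Ed A"
  shows "phylogenetic_quiver (clade_V V Ed A) (clade_E V Ed A)"
proof -
  have "A \<in> V"
    using assms(2) unfolding regular_def by blast
  then obtain U where "universal_evol_seq V Ed A U"
    using assms(1) unfolding phylogenetic_quiver_def phylogenetic_vertex_iff by blast
  then have "height V Ed A = enat (length U - 1)"
    by (rule height_universal_evol_seq)
  then show ?thesis
    unfolding phylogenetic_quiver_def
    using monotonous_clade[OF assms] phylogenetic_vertex_clade[OF assms] by blast
qed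

end
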